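(* Let $f(x)\in\mathbb{Q}(x)$ be a rational function of degree $2$. Then: (a) If $f$ has two distinct poles in $\mathbb{P}^1(\mathbb{Q})$, then $f$ satisfies WP. (b) If $f$ has exactly one pole in $\mathbb{P}^1(\mathbb{Q})$, then $f$ satisfies the EWP but does not satisfy WP. (c) If $f$ has no pole in $\mathbb{P}^1(\mathbb{Q})$, then $f$ does not satisfy the EWP.
   Context: For $X\subseteq\mathbb{Q}$ and a positive integer $N$, write $X_N:=\{x_1+\cdots+x_N : x_1,\dots,x_N\in X\}$. $X$ is a base if $X_N=\mathbb{Q}$ for some $N\ge 1$; $X$ is a virtual base if for some $N\ge 1$ every rational number can be written as $\epsilon_1x_1+\cdots+\epsilon_Nx_N$ with $x_i\in X$ and $\epsilon_i\in\{1,-1\}$. For $f\in\mathbb{Q}(x)$, $f(\mathbb{Q})$ is the set of values $f(a)$ at $a\in\mathbb{Q}$ not a pole of $f$; $f$ satisfies WP if $f(\mathbb{Q})$ is a base and satisfies the EWP if $f(\mathbb{Q})$ is a virtual base. The degree of a rational function is the maximum of the degrees of numerator and denominator in lowest terms; poles are considered on the projective line including $\infty$. *)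

theory Defs
  imports "HOL-Computational_Algebra.Polynomial"
begin

definition sumset :: "nat \<Rightarrow> rat set \<Rightarrow> rat set" where
  "sumset N X = {sum_list xs | xs. length xs = N \<and> set xs \<subseteq> X}"

definition is_base :: "rat set \<Rightarrow> bool" where
  "is_base X \<longleftrightarrow> (\<exists>N\<ge>1. sumset N X = UNIV)"

definition is_virtual_base :: "rat set \<Rightarrow> bool" where
  "is_virtual_base X \<longleftrightarrow> (\<exists>N\<ge>1. \<forall>r::rat. \<exists>xs eps.
      length xs = N \<and> length eps = N \<and> set xs \<subseteq> X \<and> set eps \<subseteq> {1, -1} \<and>
      r = sum_list (map2 (*) eps xs))"

text \<open>A rational function f = p/q in lowest terms (q nonzero, p and q coprime).\<close>
definition rf_values :: "rat poly \<Rightarrow> rat poly \<Rightarrow> rat set" where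
  "rf_values p q = {poly p a / poly q a | a. poly q a \<noteq> 0}"

definition rf_degree :: "rat poly \<Rightarrow> rat poly \<Rightarrow> nat" where
  "rf_degree p q = max (degree p) (degree q)"

definition WP :: "rat poly \<Rightarrow> rat poly \<Rightarrow> bool" where
  "WP p q \<longleftrightarrow> is_base (rf_values p q)"

definition EWP :: "rat poly \<Rightarrow> rat poly \<Rightarrow> bool" where
  "EWP p q \<longleftrightarrow> is_virtual_base (rf_values p q)"

text \<open>Poles in P^1(Q): finite rational poles (roots of q, p and q coprime), plus infinity
  when deg p > deg q.\<close>
definition rf_poles :: "rat poly \<Rightarrow> rat poly \<Rightarrow> rat option set" where
  "rf_poles p q = Some ` {a. poly q a = 0} \<union> (if degree q < degree p then {None} else {})"

end

(*
  With two rational poles, a Moebius change of variable moves them to 0 and \<infinity>, so up to finitely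
  many arguments f takes the values alpha w + gamma/w + beta with alpha, gamma nonzero.  Every nonzero
  rational is a sum of three values of w + c/w, via an explicit one-parameter family of triples
  x + y + z = 0, so six values of f reach every rational.

  With exactly one rational pole, moving it to \<infinity> turns f into a quadratic polynomial
  A w^2 + B w + C.  Its values are bounded on one side, hence so are all sums of N of them, while
  every rational is a difference (y - z) (A (y + z) + B) of two values.

  Without rational poles, clearing denominators turns the denominator into an integral binary
  quadratic form of non-square discriminant.  For a suitable prime l its values at coprime pairs
  are divisible by at most l^E, so l^E times any value of f has denominator prime to l.  Signed
  sums keep this property and therefore never equal 1 / l^(E+1).
*)

theory Submission
  imports Defs "HOL-Computational_Algebra.Nth_Powers"
begin

lemma exists_common_nonroot:
  fixes Ps :: "'a::{idom,ring_char_0} poly list"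
  assumes "0 \<notin> set Ps"
  obtains t where "\<And>P. P \<in> set Ps \<Longrightarrow> poly P t \<noteq> 0"
proof -
  have "prod_list Ps \<noteq> 0" using assms by (simp add: prod_list_zero_iff)
  then obtain t where "poly (prod_list Ps) t \<noteq> 0" using poly_all_0_iff_0 by blast
  then have "poly P t \<noteq> 0" if "P \<in> set Ps" for P
    using that poly_prod_list[of Ps t] by (auto simp: prod_list_zero_iff)
  then show thesis by (rule that)
qed

lemma plus_divide_triple_sum:
  fixes c t x :: rat
  assumes "x \<noteq> 0" "t \<noteq> 0" "1 + t \<noteq> 0"
  shows "(\<Sum>w\<leftarrow>[x, t*x, -((1+t)*x)]. w + c/w) = (c/x) * (1 + 1/t - 1/(1+t))"
proof -
  have "c/(t*x) = (c/x)/t" "c/(-((1+t)*x)) = -((c/x)/(1+t))" by simp_all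
  then show ?thesis by (simp add: algebra_simps)
qed

text \<open>The entries of the triple sum to \<open>0\<close>, so only their parts \<open>c / w\<close> contribute.
  The hypotheses on \<open>t\<close> say that \<open>x\<close> is nonzero and that \<open>x\<close>, \<open>t * x\<close> and \<open>-((1 + t) * x)\<close>
  differ from \<open>1\<close>.\<close>

lemma plus_divide_triple_witness:
  fixes c R t :: rat
  assumes c: "c \<noteq> 0" and R: "R \<noteq> 0" and t0: "t \<noteq> 0" and t1: "1 + t \<noteq> 0"
    and Q: "1 + t + t^2 \<noteq> 0" and x1: "c + (c-R)*t + (c-R)*t^2 \<noteq> 0"
    and y1: "(c-R) + (c-R)*t + c*t^2 \<noteq> 0" and z1: "c + (c+R)*t + c*t^2 \<noteq> 0"
  defines "x \<equiv> c * (1 + 1/t - 1/(1+t)) / R"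
  shows "0 \<notin> set [x, t*x, -((1+t)*x)]" "1 \<notin> set [x, t*x, -((1+t)*x)]"
    and "(\<Sum>w\<leftarrow>[x, t*x, -((1+t)*x)]. w + c/w) = R"
proof -
  define K where "K = 1 + 1/t - 1/(1+t)"
  have "K = (1 + t + t^2) / (t * (1 + t))"
    using t0 t1 by (simp add: K_def field_simps power2_eq_square)
  then have K: "K * (t * (1 + t)) = 1 + t + t^2" using t0 t1 by simp
  then have K0: "K \<noteq> 0" using Q by auto
  have x0: "x \<noteq> 0" using c R K0 by (simp add: x_def K_def[symmetric])
  then show "0 \<notin> set [x, t*x, -((1+t)*x)]" using t0 t1 by auto
  have "R * t * (1 + t) * x = c * (K * (t * (1 + t)))"
    using R by (simp add: x_def K_def[symmetric] algebra_simps)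
  with K have xR: "R * t * (1 + t) * x = c * (1 + t + t^2)" by simp
  have "x \<noteq> 1"
  proof
    assume "x = 1"
    then have "R * t * (1 + t) = c * (1 + t + t^2)" using xR by simp
    then show False using x1 by (simp add: algebra_simps power2_eq_square)
  qed
  moreover have "t * x \<noteq> 1"
  proof
    assume "t * x = 1"
    then have "R * (1 + t) = c * (1 + t + t^2)" using xR by (simp add: algebra_simps)
    then show False using y1 by (simp add: algebra_simps power2_eq_square)
  qed
  moreover have "-((1+t)*x) \<noteq> 1"
  proof
    assume z: "-((1+t)*x) = 1"
    have "R * t * (-((1+t)*x)) = - (c * (1 + t + t^2))" using xR by (simp add: algebra_simps)
    then have "- R * t = c * (1 + t + t^2)" unfolding z by simp
    then show False using z1 by (simp add: algebra_simps power2_eq_square)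
  qed
  ultimately show "1 \<notin> set [x, t*x, -((1+t)*x)]" by auto
  show "(\<Sum>w\<leftarrow>[x, t*x, -((1+t)*x)]. w + c/w) = R"
    unfolding plus_divide_triple_sum[OF x0 t0 t1] using c R K0 by (simp add: x_def K_def[symmetric])
qed

lemma sum_of_three_plus_divide:
  fixes c R :: rat
  assumes c: "c \<noteq> 0" and R: "R \<noteq> 0"
  obtains ws where "length ws = 3" "0 \<notin> set ws" "1 \<notin> set ws" "(\<Sum>w\<leftarrow>ws. w + c/w) = R"
proof -
  let ?Ps = "[[:0,1:], [:1,1:], [:1,1,1:], [:c, c-R, c-R:], [:c-R, c-R, c:], [:c, c+R, c:]]"
  have "0 \<notin> set ?Ps" using c by auto
  then obtain t where t: "\<And>P. P \<in> set ?Ps \<Longrightarrow> poly P t \<noteq> 0"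
    by (rule exists_common_nonroot) iprover
  have "t \<noteq> 0" "1 + t \<noteq> 0" "1 + t + t^2 \<noteq> 0" "c + (c-R)*t + (c-R)*t^2 \<noteq> 0"
    "(c-R) + (c-R)*t + c*t^2 \<noteq> 0" "c + (c+R)*t + c*t^2 \<noteq> 0"
    using t[of "[:0,1:]"] t[of "[:1,1:]"] t[of "[:1,1,1:]"] t[of "[:c, c-R, c-R:]"]
      t[of "[:c-R, c-R, c:]"] t[of "[:c, c+R, c:]"]
    by (simp_all add: algebra_simps power2_eq_square)
  note witness = plus_divide_triple_witness[OF c R this]
  show thesis by (rule that[OF _ witness]) simp
qed

lemma is_base_if_hyperbola_values:
  fixes X :: "rat set" and \<alpha> \<beta> \<gamma> :: rat
  assumes \<alpha>: "\<alpha> \<noteq> 0" and \<gamma>: "\<gamma> \<noteq> 0"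
    and in_X: "\<And>w. w \<noteq> 0 \<Longrightarrow> w \<noteq> 1 \<Longrightarrow> \<alpha> * w + \<gamma> / w + \<beta> \<in> X"
  shows "is_base X"
proof -
  define c where "c = \<gamma> / \<alpha>"
  have c: "c \<noteq> 0" using \<alpha> \<gamma> by (simp add: c_def)
  have "r \<in> sumset 6 X" for r
  proof -
    define T where "T = (r - 6 * \<beta>) / \<alpha>"
    \<comment> \<open>split \<open>T\<close> into two nonzero targets, as \<open>sum_of_three_plus_divide\<close> requires\<close>
    define R where "R = (if T = 0 then 1 else T / 2)"
    have R: "R \<noteq> 0" "T - R \<noteq> 0" by (auto simp: R_def)
    obtain ws1 where ws1: "length ws1 = 3" "0 \<notin> set ws1" "1 \<notin> set ws1"
        "(\<Sum>w\<leftarrow>ws1. w + c/w) = R"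
      using sum_of_three_plus_divide[OF c R(1)] by blast
    obtain ws2 where ws2: "length ws2 = 3" "0 \<notin> set ws2" "1 \<notin> set ws2"
        "(\<Sum>w\<leftarrow>ws2. w + c/w) = T - R"
      using sum_of_three_plus_divide[OF c R(2)] by blast
    define ws where "ws = ws1 @ ws2"
    define h where "h w = w + c / w" for w
    have "(\<lambda>w. \<alpha> * w + \<gamma> / w + \<beta>) = (\<lambda>w. \<alpha> * h w + \<beta>)"
      using \<alpha> by (simp add: h_def c_def algebra_simps)
    moreover have "(\<Sum>w\<leftarrow>vs. \<alpha> * h w + \<beta>) = \<alpha> * (\<Sum>w\<leftarrow>vs. h w) + of_nat (length vs) * \<beta>" for vs
      by (induction vs) (simp_all add: algebra_simps)
    ultimately have "(\<Sum>w\<leftarrow>ws. \<alpha> * w + \<gamma> / w + \<beta>) = \<alpha> * (\<Sum>w\<leftarrow>ws. w + c/w) + 6 * \<beta>"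
      using ws1(1) ws2(1) by (simp add: ws_def h_def distrib_left)
    also have "\<dots> = r" using \<alpha> ws1(4) ws2(4) by (simp add: ws_def T_def)
    finally have sum: "sum_list (map (\<lambda>w. \<alpha> * w + \<gamma> / w + \<beta>) ws) = r" .
    have "w \<noteq> 0" "w \<noteq> 1" if "w \<in> set ws" for w
      using that ws1(2,3) ws2(2,3) unfolding ws_def by auto
    then have "set (map (\<lambda>w. \<alpha> * w + \<gamma> / w + \<beta>) ws) \<subseteq> X"
      using in_X by auto
    moreover have "length (map (\<lambda>w. \<alpha> * w + \<gamma> / w + \<beta>) ws) = 6"
      using ws1(1) ws2(1) by (simp add: ws_def)
    ultimately show ?thesis using sum unfolding sumset_def by blast
  qed
  then show ?thesis unfolding is_base_def by (intro exI[of _ 6]) auto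
qed

lemma exists_quadratic_difference:
  fixes A B C r :: rat
  assumes A: "A \<noteq> 0"
  obtains y z where "y \<noteq> 0" "z \<noteq> 0" "(A*y^2 + B*y + C) - (A*z^2 + B*z + C) = r"
proof -
  have "0 \<notin> set [[:0,1:], [:r, -B, A:], [:r, -B, -A:]]" using A by auto
  then obtain d where d: "\<And>P. P \<in> set [[:0,1:], [:r, -B, A:], [:r, -B, -A:]] \<Longrightarrow> poly P d \<noteq> 0"
    by (rule exists_common_nonroot) iprover
  have d0: "d \<noteq> 0" and ry: "r - B*d + A*d^2 \<noteq> 0" and rz: "r - B*d - A*d^2 \<noteq> 0"
    using d[of "[:0,1:]"] d[of "[:r, -B, A:]"] d[of "[:r, -B, -A:]"]
    by (simp_all add: algebra_simps power2_eq_square)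
  define s where "s = (r/d - B) / A"
  have s: "r = d * (A * s + B)" using A d0 by (simp add: s_def)
  show thesis
  proof (rule that[of "(s + d) / 2" "(s - d) / 2"])
    show "(s + d) / 2 \<noteq> 0"
    proof
      assume "(s + d) / 2 = 0"
      then have "s = - d" by simp
      then show False using ry s by (simp add: algebra_simps power2_eq_square)
    qed
    show "(s - d) / 2 \<noteq> 0"
    proof
      assume "(s - d) / 2 = 0"
      then have "s = d" by simp
      then show False using rz s by (simp add: algebra_simps power2_eq_square)
    qed
    have diff: "(A*y^2 + B*y + C) - (A*z^2 + B*z + C) = (y - z) * (A*(y + z) + B)" for y z
      by (simp add: algebra_simps power2_eq_square)
    have "(s + d)/2 - (s - d)/2 = d" "(s + d)/2 + (s - d)/2 = s" by (simp_all add: field_simps)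
    then show "(A*((s + d)/2)^2 + B*((s + d)/2) + C) - (A*((s - d)/2)^2 + B*((s - d)/2) + C) = r"
      unfolding diff using s by simp
  qed
qed

lemma is_virtual_base_if_quadratic_values:
  fixes X :: "rat set" and A B C :: rat
  assumes A: "A \<noteq> 0" and in_X: "\<And>w. w \<noteq> 0 \<Longrightarrow> A*w^2 + B*w + C \<in> X"
  shows "is_virtual_base X"
proof -
  have "\<exists>xs eps. length xs = 2 \<and> length eps = 2 \<and> set xs \<subseteq> X \<and> set eps \<subseteq> {1, -1} \<and>
      r = sum_list (map2 (*) eps xs)" for r
  proof -
    obtain y z where "y \<noteq> 0" "z \<noteq> 0" "(A*y^2 + B*y + C) - (A*z^2 + B*z + C) = r"
      using exists_quadratic_difference[OF A] by blast
    then show ?thesis using in_X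
      by (intro exI[of _ "[A*y^2 + B*y + C, A*z^2 + B*z + C]"] exI[of _ "[1, -1]"]) auto
  qed
  then show ?thesis unfolding is_virtual_base_def by (intro exI[of _ 2]) auto
qed

lemma sumset_bdd_below:
  fixes X :: "rat set"
  assumes "bdd_below X" shows "bdd_below (sumset N X)"
proof -
  obtain m where m: "\<And>x. x \<in> X \<Longrightarrow> m \<le> x" using assms by (auto simp: bdd_below_def)
  have "of_nat (length xs) * m \<le> sum_list xs" if "set xs \<subseteq> X" for xs
    using that by (induction xs) (auto simp: algebra_simps intro: add_mono m)
  then show ?thesis unfolding bdd_below_def sumset_def by (intro exI[of _ "of_nat N * m"]) auto
qed

lemma sumset_bdd_above:
  fixes X :: "rat set"
  assumes "bdd_above X" shows "bdd_above (sumset N X)"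
proof -
  obtain m where m: "\<And>x. x \<in> X \<Longrightarrow> x \<le> m" using assms by (auto simp: bdd_above_def)
  have "sum_list xs \<le> of_nat (length xs) * m" if "set xs \<subseteq> X" for xs
    using that by (induction xs) (auto simp: algebra_simps intro: add_mono m)
  then show ?thesis unfolding bdd_above_def sumset_def by (intro exI[of _ "of_nat N * m"]) auto
qed

lemma is_base_unbounded:
  fixes X :: "rat set"
  assumes "is_base X" shows "\<not> bdd_below X" "\<not> bdd_above X"
proof -
  obtain N where N: "sumset N X = UNIV" using assms unfolding is_base_def by blast
  have "\<not> bdd_below (UNIV :: rat set)" "\<not> bdd_above (UNIV :: rat set)"
    by (auto simp: bdd_below_def bdd_above_def not_le intro: lt_ex gt_ex)
  then show "\<not> bdd_below X" "\<not> bdd_above X"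
    using sumset_bdd_below[of X N] sumset_bdd_above[of X N] N by auto
qed

lemma quadratic_bdd_below:
  fixes A B C :: rat
  assumes "A > 0" shows "bdd_below (range (\<lambda>w. A*w^2 + B*w + C))"
proof -
  have "C - B^2 / (4*A) \<le> A*w^2 + B*w + C" for w
  proof -
    have "0 \<le> (2*A*w + B)^2 / (4*A)" using assms by simp
    also have "\<dots> = A*w^2 + B*w + C - (C - B^2 / (4*A))"
      using assms by (simp add: field_simps power2_eq_square)
    finally show ?thesis by simp
  qed
  then show ?thesis unfolding bdd_below_def by blast
qed

lemma not_is_base_if_quadratic_values:
  fixes X :: "rat set" and A B C :: rat
  assumes A: "A \<noteq> 0" and sub: "X \<subseteq> range (\<lambda>w. A*w^2 + B*w + C)"
  shows "\<not> is_base X"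
proof
  assume base: "is_base X"
  show False
  proof (cases "A > 0")
    case True
    then show False
      using is_base_unbounded(1)[OF base] bdd_below_mono[OF quadratic_bdd_below[OF True] sub] by blast
  next
    case False
    then have "bdd_below (range (\<lambda>w. (-A)*w^2 + (-B)*w + (-C)))"
      using A by (intro quadratic_bdd_below) simp
    then obtain M where M: "\<And>w. M \<le> (-A)*w^2 + (-B)*w + (-C)"
      unfolding bdd_below_def by blast
    have "A*w^2 + B*w + C \<le> -M" for w using M[of w] by simp
    then have "bdd_above (range (\<lambda>w. A*w^2 + B*w + C))" unfolding bdd_above_def by blast
    then have "bdd_above X" by (rule bdd_above_mono) (rule sub)
    then show False using is_base_unbounded(2)[OF base] by simp
  qed
qed

lemma poly_degree_le_2:
  fixes p :: "'a::comm_semiring_1 poly"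
  assumes "degree p \<le> 2"
  shows "poly p a = coeff p 0 + coeff p 1 * a + coeff p 2 * a^2"
proof -
  have "poly p a = (\<Sum>i\<le>2. coeff p i * a ^ i)"
    unfolding poly_altdef by (rule sum.mono_neutral_left) (use assms in \<open>auto simp: coeff_eq_0\<close>)
  also have "\<dots> = coeff p 0 + coeff p 1 * a + coeff p 2 * a^2"
    by (simp add: numeral_2_eq_2)
  finally show ?thesis .
qed

lemma poly_degree_le_2_shift:
  fixes p :: "'a::comm_ring_1 poly"
  assumes "degree p \<le> 2"
  shows "poly p (r + x) = poly p r + (coeff p 1 + 2 * coeff p 2 * r) * x + coeff p 2 * x^2"
  unfolding poly_degree_le_2[OF assms] by (simp add: algebra_simps power2_eq_square)

lemma coeff_2_nonzero_if_degree_2: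
  fixes p :: "'a::zero poly"
  shows "degree p = 2 \<Longrightarrow> coeff p 2 \<noteq> 0"
  by (metis degree_0 leading_coeff_neq_0 zero_neq_numeral)

lemma homogenize_degree_le_2:
  fixes p :: "rat poly" and P :: "nat \<Rightarrow> int" and d u w :: int
  assumes p: "degree p \<le> 2" and P: "\<And>i. i \<le> 2 \<Longrightarrow> of_int (P i) = of_int d * coeff p i"
    and w: "w \<noteq> 0"
  shows "of_int (P 2 * u^2 + P 1 * u * w + P 0 * w^2) = of_int d * of_int w ^ 2 * poly p (of_int u / of_int w)"
  using w P[of 0] P[of 1] P[of 2] poly_degree_le_2[OF p] by (simp add: field_simps power2_eq_square)

lemma coprime_imp_poly_nonzero_at_root:
  fixes p q :: "'a::field poly"
  assumes "coprime p q" "poly q r = 0" shows "poly p r \<noteq> 0"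
proof
  assume "poly p r = 0"
  then have "[:-r, 1:] dvd p" "[:-r, 1:] dvd q" using assms(2) by (simp_all add: poly_eq_0_iff_dvd)
  then have "is_unit [:-r, 1:]" using assms(1) coprime_common_divisor by blast
  then show False by (simp add: is_unit_iff_degree)
qed

lemma rf_valuesI: "poly q a \<noteq> 0 \<Longrightarrow> poly p a / poly q a \<in> rf_values p q"
  unfolding rf_values_def by blast

lemma WP_if_linear_denominator:
  fixes p q :: "rat poly"
  assumes p: "degree p = 2" and q: "\<And>a. poly q a = c * (a - r)" "c \<noteq> 0"
    and pr: "poly p r \<noteq> 0"
  shows "WP p q"
  unfolding WP_def
proof (rule is_base_if_hyperbola_values)
  show "coeff p 2 / c \<noteq> 0" "poly p r / c \<noteq> 0"
    using coeff_2_nonzero_if_degree_2[OF p] q(2) pr by auto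
  fix w :: rat assume w: "w \<noteq> 0"
  have qw: "poly q (r + w) = c * w" using q(1) by simp
  have "poly p (r + w) / poly q (r + w)
      = coeff p 2 / c * w + poly p r / c / w + (coeff p 1 + 2 * coeff p 2 * r) / c"
    unfolding qw poly_degree_le_2_shift[of p, OF eq_imp_le[OF p]]
    using w q(2) by (simp add: field_simps power2_eq_square)
  moreover have "poly q (r + w) \<noteq> 0" using qw w q(2) by simp
  ultimately show "coeff p 2 / c * w + poly p r / c / w + (coeff p 1 + 2 * coeff p 2 * r) / c
      \<in> rf_values p q"
    by (metis rf_valuesI)
qed

text \<open>The substitution \<open>a = s + (s - r) / (w - 1)\<close> sends \<open>w = 0\<close> to the pole \<open>r\<close> and
  \<open>w = 1\<close> to \<open>\<infinity>\<close>, so in the variable \<open>w\<close> the poles are \<open>0\<close> and \<open>\<infinity>\<close>.\<close>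

lemma rf_value_two_poles_substitution:
  fixes p q :: "rat poly"
  assumes p: "degree p \<le> 2" and q: "\<And>a. poly q a = c * (a - r) * (a - s)" "c \<noteq> 0"
    and rs: "r \<noteq> s" and w: "w \<noteq> 0" "w \<noteq> 1"
  defines "d \<equiv> s - r"
  defines "e \<equiv> d / (w - 1)"
  shows "poly q (s + e) \<noteq> 0"
    and "poly p (s + e) / poly q (s + e) = poly p s / (c * d^2) * w + poly p r / (c * d^2) / w
           + (coeff p 2 / c - (poly p r + poly p s) / (c * d^2))"
proof -
  define L where "L = coeff p 1 + 2 * coeff p 2 * s"
  have d: "d \<noteq> 0" using rs by (simp add: d_def)
  have "poly p r = poly p s - L * d + coeff p 2 * d^2"
    using poly_degree_le_2_shift[OF p, of s "-d"] by (simp add: d_def L_def algebra_simps power2_eq_square)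
  then have L: "L = (poly p s - poly p r) / d + coeff p 2 * d"
    using d by (simp add: field_simps power2_eq_square)
  have e: "e \<noteq> 0" "e + d \<noteq> 0" using d w by (auto simp: e_def field_simps)
  have qa: "poly q (s + e) = c * e * (e + d)" using q(1) by (simp add: d_def)
  then show "poly q (s + e) \<noteq> 0" using e q(2) by simp
  have num: "poly p (s + e) = coeff p 2 * (e * (e + d)) + poly p s * (e + d) / d - poly p r * e / d"
    unfolding poly_degree_le_2_shift[OF p] L_def[symmetric] L
    using d by (simp add: field_simps power2_eq_square)
  have frac: "(a * (e * f) + b * f / d - g * e / d) / (c * e * f)
      = a / c + b / (c * d) * (1 / e) - g / (c * d) * (1 / f)"
    if "f \<noteq> 0" for a b g f :: rat
    using that d e q(2) by (simp add: field_simps)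
  have inv: "1 / e = (w - 1) / d" "1 / (e + d) = (w - 1) / (d * w)"
    using d w by (simp_all add: e_def field_simps)
  have "poly p (s + e) / poly q (s + e)
      = coeff p 2 / c + poly p s / (c * d) * (1 / e) - poly p r / (c * d) * (1 / (e + d))"
    unfolding qa num by (rule frac) (rule e(2))
  also have "\<dots> = coeff p 2 / c + poly p s / (c * d) * ((w - 1) / d)
      - poly p r / (c * d) * ((w - 1) / (d * w))"
    unfolding inv ..
  also have "\<dots> = poly p s / (c * d^2) * w + poly p r / (c * d^2) / w
      + (coeff p 2 / c - (poly p r + poly p s) / (c * d^2))"
    using d w q(2) by (simp add: field_simps power2_eq_square)
  finally show "poly p (s + e) / poly q (s + e) = poly p s / (c * d^2) * w + poly p r / (c * d^2) / w
      + (coeff p 2 / c - (poly p r + poly p s) / (c * d^2))" .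
qed

lemma WP_if_two_finite_poles:
  fixes p q :: "rat poly"
  assumes p: "degree p \<le> 2" and q: "\<And>a. poly q a = c * (a - r) * (a - s)" "c \<noteq> 0"
    and rs: "r \<noteq> s" and pr: "poly p r \<noteq> 0" and ps: "poly p s \<noteq> 0"
  shows "WP p q"
  unfolding WP_def
proof (rule is_base_if_hyperbola_values)
  show "poly p s / (c * (s - r)^2) \<noteq> 0" "poly p r / (c * (s - r)^2) \<noteq> 0"
    using pr ps q(2) rs by auto
  fix w :: rat assume "w \<noteq> 0" "w \<noteq> 1"
  from rf_value_two_poles_substitution[OF p q rs this] rf_valuesI
  show "poly p s / (c * (s - r)^2) * w + poly p r / (c * (s - r)^2) / w
      + (coeff p 2 / c - (poly p r + poly p s) / (c * (s - r)^2)) \<in> rf_values p q"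
    by metis
qed

lemma EWP_not_WP_if_polynomial:
  fixes p q :: "rat poly"
  assumes p: "degree p = 2" and q: "\<And>a. poly q a = c" "c \<noteq> 0"
  shows "EWP p q \<and> \<not> WP p q"
proof -
  let ?A = "coeff p 2 / c" and ?B = "coeff p 1 / c" and ?C = "coeff p 0 / c"
  have A: "?A \<noteq> 0" using coeff_2_nonzero_if_degree_2[OF p] q(2) by simp
  have val: "poly p a / poly q a = ?A * a^2 + ?B * a + ?C" for a
    unfolding q(1) poly_degree_le_2[of p, OF eq_imp_le[OF p]] by (simp add: add_divide_distrib)
  have vals: "rf_values p q = range (\<lambda>w. ?A * w^2 + ?B * w + ?C)"
    unfolding rf_values_def val using q by auto
  have "is_virtual_base (rf_values p q)"
    by (rule is_virtual_base_if_quadratic_values[OF A]) (unfold vals, rule rangeI)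
  moreover have "\<not> is_base (rf_values p q)"
    by (rule not_is_base_if_quadratic_values[OF A]) (unfold vals, rule order_refl)
  ultimately show ?thesis unfolding EWP_def WP_def by blast
qed

lemma EWP_not_WP_if_double_pole:
  fixes p q :: "rat poly"
  assumes p: "degree p \<le> 2" and q: "\<And>a. poly q a = c * (a - r)^2" "c \<noteq> 0"
    and pr: "poly p r \<noteq> 0"
  shows "EWP p q \<and> \<not> WP p q"
proof -
  let ?A = "poly p r / c" and ?B = "(coeff p 1 + 2 * coeff p 2 * r) / c" and ?C = "coeff p 2 / c"
  have A: "?A \<noteq> 0" using pr q(2) by simp
  have val: "poly p (r + 1/w) / poly q (r + 1/w) = ?A * w^2 + ?B * w + ?C" if "w \<noteq> 0" for w
    unfolding q(1) poly_degree_le_2_shift[OF p] using that q(2)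
    by (simp add: field_simps power2_eq_square)
  have vals: "rf_values p q = (\<lambda>w. ?A * w^2 + ?B * w + ?C) ` (UNIV - {0})"
  proof (intro equalityI subsetI)
    fix v assume "v \<in> rf_values p q"
    then obtain a where v: "v = poly p a / poly q a" and "poly q a \<noteq> 0"
      by (auto simp: rf_values_def)
    then have "a - r \<noteq> 0" using q(1) by auto
    then have "v = ?A * (1 / (a - r))^2 + ?B * (1 / (a - r)) + ?C" "1 / (a - r) \<noteq> 0"
      using v val[of "1 / (a - r)"] by simp_all
    then show "v \<in> (\<lambda>w. ?A * w^2 + ?B * w + ?C) ` (UNIV - {0})" by blast
  next
    fix v assume "v \<in> (\<lambda>w. ?A * w^2 + ?B * w + ?C) ` (UNIV - {0})"
    then obtain w where "w \<noteq> 0" "v = ?A * w^2 + ?B * w + ?C" by auto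
    moreover have "poly q (r + 1/w) \<noteq> 0" using \<open>w \<noteq> 0\<close> q by simp
    ultimately show "v \<in> rf_values p q" using val rf_valuesI by metis
  qed
  have "is_virtual_base (rf_values p q)"
    by (rule is_virtual_base_if_quadratic_values[OF A]) (auto simp only: vals)
  moreover have "\<not> is_base (rf_values p q)"
    by (rule not_is_base_if_quadratic_values[OF A]) (auto simp only: vals)
  ultimately show ?thesis unfolding EWP_def WP_def by blast
qed

lemma prime_power_dvd_square_imp_dvd:
  fixes l X :: int
  assumes l: "prime l" and dvd: "l ^ k dvd X^2"
  shows "l ^ ((k + 1) div 2) dvd X"
proof (cases "X = 0")
  case False
  have nu: "\<not> is_unit l" using l not_prime_unit by blast
  have "k \<le> multiplicity l (X^2)" using dvd False nu power_dvd_iff_le_multiplicity[of "X^2"] by simp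
  also have "multiplicity l (X^2) = 2 * multiplicity l X"
    using prime_elem_multiplicity_power_distrib[OF prime_imp_prime_elem[OF l] False, of 2] by simp
  finally have "(k + 1) div 2 \<le> multiplicity l X" by linarith
  then show ?thesis using False nu power_dvd_iff_le_multiplicity by blast
qed simp

lemma odd_multiplicity_not_dvd_norm:
  fixes l D D' X Y :: int
  assumes l: "prime l" and D: "D = l^(2*j+1) * D'" and nD: "\<not> l dvd D'" and nY: "\<not> l dvd Y"
  shows "\<not> l^(2*j+2) dvd X^2 - D*Y^2"
proof
  assume h: "l^(2*j+2) dvd X^2 - D*Y^2"
  then have "l^(2*j+1) dvd X^2 - D*Y^2" by (rule dvd_trans[rotated]) (simp add: le_imp_power_dvd)
  moreover have "l^(2*j+1) dvd D*Y^2" using D by simp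
  ultimately have "l^(2*j+1) dvd (X^2 - D*Y^2) + D*Y^2" by (rule dvd_add)
  then have "l^(j+1) dvd X" using prime_power_dvd_square_imp_dvd[OF l, of "2*j+1" X] by simp
  then have "(l^(j+1))^2 dvd X^2" by (rule dvd_power_same)
  moreover have "(l^(j+1))^2 = l^(2*j+2)" unfolding power_mult[symmetric] by (simp add: mult.commute)
  ultimately have "l^(2*j+2) dvd X^2" by (simp only:)
  then have "l^(2*j+2) dvd X^2 - (X^2 - D*Y^2)" using h by (rule dvd_diff)
  then have "l^(2*j+1) * l dvd l^(2*j+1) * (D' * Y^2)" using D by (simp add: algebra_simps)
  then have "l dvd D' * Y^2" using l by (simp add: prime_gt_0_int less_imp_neq[symmetric])
  then have "l dvd D' \<or> l dvd Y^2" using l prime_dvd_mult_iff by blast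
  then show False using nD nY prime_dvd_power[OF l] by blast
qed

lemma four_not_dvd_square_plus_odd_square:
  fixes x y :: int
  assumes "odd y" shows "\<not> 4 dvd x^2 + y^2"
proof -
  have no: "\<not> 4 dvd 4 * K + (1::int)" "\<not> 4 dvd 4 * K + (2::int)" for K by presburger+
  obtain b where y: "y = 2*b + 1" using assms by (rule oddE)
  show ?thesis
  proof (cases "even x")
    case True
    then obtain a where "x = 2*a" by (rule evenE)
    then have "x^2 + y^2 = 4 * (a^2 + b^2 + b) + 1" using y by (simp add: power2_eq_square algebra_simps)
    then show ?thesis using no(1) by presburger
  next
    case False
    then obtain a where "x = 2*a + 1" by (rule oddE)
    then have "x^2 + y^2 = 4 * (a^2 + a + b^2 + b) + 2" using y by (simp add: power2_eq_square algebra_simps)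
    then show ?thesis using no(2) by presburger
  qed
qed

lemma two_power_not_dvd_sum_of_squares:
  fixes k k' X Y :: int
  assumes k: "k = 2^t * k'" and ok: "odd k'" and oY: "odd Y"
  shows "\<not> 2^(2*t+2) dvd X^2 + k^2*Y^2"
proof
  assume h: "2^(2*t+2) dvd X^2 + k^2*Y^2"
  have k2: "k^2 = 2^(2*t) * k'^2" using k by (simp add: power_mult_distrib power_mult[symmetric] mult.commute)
  have "(2::int)^(2*t) dvd X^2 + k^2*Y^2" using h by (rule dvd_trans[rotated]) (simp add: le_imp_power_dvd)
  then have "(2::int)^(2*t) dvd X^2" using k2 by (simp add: dvd_add_left_iff)
  then obtain X' where X': "X = 2^t * X'" using prime_power_dvd_square_imp_dvd[of 2 "2*t" X] by (auto elim: dvdE)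
  have "X^2 + k^2*Y^2 = 2^(2*t) * (X'^2 + (k'*Y)^2)"
    using X' k2 by (simp add: power_mult_distrib power_mult[symmetric] algebra_simps)
  with h have "4 dvd X'^2 + (k'*Y)^2" by (simp add: power_add)
  moreover have "odd (k'*Y)" using ok oY by simp
  ultimately show False using four_not_dvd_square_plus_odd_square by blast
qed

lemma nonsquare_bounded_norm_valuation:
  fixes D :: int
  assumes nonsquare: "\<And>k. D \<noteq> k^2"
  obtains l E where "prime l" "\<And>X Y. \<not> l dvd Y \<Longrightarrow> \<not> l^(Suc E) dvd X^2 - D*Y^2"
proof (cases "\<exists>l. prime l \<and> odd (multiplicity l D)")
  case True
  then obtain l where l: "prime l" "odd (multiplicity l D)" by blast
  have "D \<noteq> 0" using nonsquare[of 0] by simp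
  moreover have "\<not> is_unit l" using l not_prime_unit by blast
  ultimately obtain D' where D': "D = l ^ multiplicity l D * D'" "\<not> l dvd D'"
    using multiplicity_decompose' by blast
  from l(2) obtain j where j: "multiplicity l D = 2*j + 1" by (rule oddE)
  show thesis
    using that[OF l(1), of "2*j+1"] odd_multiplicity_not_dvd_norm[OF l(1) _ D'(2)] D'(1) j
    by (simp add: add_2_eq_Suc')
next
  case False
  \<comment> \<open>all multiplicities are even, so \<open>D = - k^2\<close> and the prime \<open>2\<close> works\<close>
  then have "is_nth_power 2 (normalize D)"
    using is_nth_power_conv_multiplicity[of 2 D] by auto
  then obtain k where k: "\<bar>D\<bar> = k^2" by (auto simp: is_nth_power_def)
  with nonsquare[of k] have Dk: "D = -(k^2)" by (cases "D \<ge> 0") auto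
  then have "k \<noteq> 0" using nonsquare[of 0] by auto
  moreover have "\<not> is_unit (2::int)" by simp
  ultimately obtain k' where k': "k = 2 ^ multiplicity 2 k * k'" "\<not> 2 dvd k'"
    using multiplicity_decompose' by blast
  show thesis
    using that[of 2 "2 * multiplicity 2 k + 1"] two_power_not_dvd_sum_of_squares[OF k'(1)] k'(2) Dk
    by (simp add: add_2_eq_Suc')
qed

lemma quadratic_form_bounded_valuation:
  fixes Q0 Q1 Q2 :: int
  assumes nonsquare: "\<And>k. Q1^2 - 4*Q0*Q2 \<noteq> k^2"
  obtains l E where "prime l"
    "\<And>u w. coprime u w \<Longrightarrow> \<not> l^(Suc E) dvd Q2*u^2 + Q1*u*w + Q0*w^2"
proof -
  define D where "D = Q1^2 - 4*Q0*Q2"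
  obtain l E where l: "prime l" and norm: "\<And>X Y. \<not> l dvd Y \<Longrightarrow> \<not> l^(Suc E) dvd X^2 - D*Y^2"
    using nonsquare_bounded_norm_valuation[of D] nonsquare unfolding D_def by blast
  have "\<not> l^(Suc E) dvd Q2*u^2 + Q1*u*w + Q0*w^2" if "coprime u w" for u w
  proof
    assume dvd: "l^(Suc E) dvd Q2*u^2 + Q1*u*w + Q0*w^2"
    have "\<not> (l dvd u \<and> l dvd w)"
      using that l coprime_common_divisor not_prime_unit by blast
    moreover have "4*Q2*(Q2*u^2 + Q1*u*w + Q0*w^2) = (2*Q2*u + Q1*w)^2 - D*w^2"
      and "4*Q0*(Q2*u^2 + Q1*u*w + Q0*w^2) = (2*Q0*w + Q1*u)^2 - D*u^2"
      unfolding D_def by (simp_all add: power2_eq_square algebra_simps)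
    moreover have "l^(Suc E) dvd 4*Q2*(Q2*u^2 + Q1*u*w + Q0*w^2)"
      and "l^(Suc E) dvd 4*Q0*(Q2*u^2 + Q1*u*w + Q0*w^2)"
      using dvd by simp_all
    ultimately show False using norm by metis
  qed
  then show thesis using that l by blast
qed

definition local_int :: "int \<Rightarrow> rat set" where
  "local_int l = {of_int n / of_int m | n m. \<not> l dvd m}"

lemma local_int_0: "prime l \<Longrightarrow> 0 \<in> local_int l"
  unfolding local_int_def using not_prime_unit by (intro CollectI exI[of _ 0] exI[of _ 1]) auto

lemma local_int_add:
  assumes "prime l" "x \<in> local_int l" "y \<in> local_int l"
  shows "x + y \<in> local_int l"
proof -
  obtain n m n' m' where x: "x = of_int n / of_int m" "\<not> l dvd m"
    and y: "y = of_int n' / of_int m'" "\<not> l dvd m'"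
    using assms(2,3) by (auto simp: local_int_def)
  moreover have "m \<noteq> 0" "m' \<noteq> 0" using x(2) y(2) by auto
  ultimately have "x + y = of_int (n * m' + n' * m) / of_int (m * m')"
    by (simp add: field_simps)
  moreover have "\<not> l dvd m * m'" using x(2) y(2) assms(1) prime_dvd_mult_iff by blast
  ultimately show ?thesis unfolding local_int_def by blast
qed

lemma local_int_uminus:
  assumes "x \<in> local_int l" shows "- x \<in> local_int l"
proof -
  obtain n m where "x = of_int n / of_int m" "\<not> l dvd m"
    using assms by (auto simp: local_int_def)
  then have "- x = of_int (- n) / of_int m" "\<not> l dvd m" by simp_all
  then show ?thesis unfolding local_int_def by blast
qed

lemma inverse_not_local_int:
  assumes "l \<noteq> 0" shows "1 / of_int l \<notin> local_int l"
proof
  assume "1 / of_int l \<in> local_int l"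
  then obtain n m where nm: "1 / of_int l = (of_int n / of_int m :: rat)" "\<not> l dvd m"
    by (auto simp: local_int_def)
  then have "m \<noteq> 0" by auto
  with nm(1) assms have "of_int m = (of_int (l * n) :: rat)" by (simp add: field_simps)
  then have "m = l * n" by (simp only: of_int_eq_iff)
  with nm(2) show False by simp
qed

lemma local_int_signed_sum:
  assumes l: "prime l" and X: "\<And>x. x \<in> X \<Longrightarrow> c * x \<in> local_int l"
  shows "set xs \<subseteq> X \<Longrightarrow> set eps \<subseteq> {1, -1} \<Longrightarrow> c * sum_list (map2 (*) eps xs) \<in> local_int l"
proof (induction xs arbitrary: eps)
  case (Cons x xs)
  show ?case
  proof (cases eps)
    case (Cons e es)
    have "c * sum_list (map2 (*) eps (x # xs)) = e * (c * x) + c * sum_list (map2 (*) es xs)"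
      using Cons by (simp add: algebra_simps)
    moreover have "e * (c * x) \<in> local_int l"
      using Cons.prems Cons X[of x] local_int_uminus by auto
    moreover have "c * sum_list (map2 (*) es xs) \<in> local_int l"
      using Cons.IH Cons.prems Cons by auto
    ultimately show ?thesis using local_int_add[OF l] by simp
  qed (simp add: local_int_0[OF l])
qed (simp add: local_int_0[OF l])

lemma not_is_virtual_base_if_local_int:
  assumes l: "prime l" and c: "c \<noteq> 0" and X: "\<And>x. x \<in> X \<Longrightarrow> c * x \<in> local_int l"
  shows "\<not> is_virtual_base X"
proof
  assume "is_virtual_base X"
  then obtain xs eps where xs: "set xs \<subseteq> X" "set eps \<subseteq> {1, -1}"
      and sum: "1 / (c * of_int l) = sum_list (map2 (*) eps xs)"
    unfolding is_virtual_base_def by blast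
  have "c * (1 / (c * of_int l)) \<in> local_int l"
    unfolding sum using local_int_signed_sum[OF l X xs] .
  moreover have "c * (1 / (c * of_int l)) = 1 / of_int l" using c by simp
  ultimately show False using inverse_not_local_int l by (metis not_prime_0)
qed

lemma prime_power_times_fraction_local_int:
  fixes l P Q :: int
  assumes l: "prime l" and Q: "Q \<noteq> 0" and nd: "\<not> l^(Suc E) dvd Q"
  shows "of_int l ^ E * (of_int P / of_int Q) \<in> local_int l"
proof -
  have nu: "\<not> is_unit l" using l not_prime_unit by blast
  obtain Q' where Q': "Q = l ^ multiplicity l Q * Q'" "\<not> l dvd Q'"
    using multiplicity_decompose'[OF Q nu] by blast
  define k where "k = multiplicity l Q"
  have "k \<le> E" using nd nu Q power_dvd_iff_le_multiplicity[of Q l "Suc E"] by (simp add: k_def)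
  then have E: "E = k + (E - k)" by simp
  have "of_int l ^ E * (of_int P / of_int Q) = of_int (l^(E-k) * P) / (of_int Q' :: rat)"
    using Q'(1) Q l unfolding k_def[symmetric]
    by (subst E) (auto simp: power_add field_simps)
  then show ?thesis using Q'(2) unfolding local_int_def by blast
qed

lemma discriminant_nonsquare_if_no_root:
  fixes Q0 Q1 Q2 :: int
  assumes Q2: "Q2 \<noteq> 0" and no_root: "\<And>a::rat. of_int Q0 + of_int Q1 * a + of_int Q2 * a^2 \<noteq> 0"
  shows "Q1^2 - 4*Q0*Q2 \<noteq> k^2"
proof
  assume k: "Q1^2 - 4*Q0*Q2 = k^2"
  define a :: rat where "a = of_int (k - Q1) / of_int (2*Q2)"
  have "4 * of_int Q2 * (of_int Q0 + of_int Q1 * a + of_int Q2 * a^2)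
      = (2 * of_int Q2 * a + of_int Q1)^2 - of_int (Q1^2 - 4*Q0*Q2)"
    by (simp add: power2_eq_square algebra_simps)
  also have "2 * of_int Q2 * a + of_int Q1 = of_int k" using Q2 by (simp add: a_def field_simps)
  finally show False using k Q2 no_root[of a] by simp
qed

lemma exists_common_denominator:
  fixes A :: "rat set"
  assumes "finite A"
  obtains d :: int where "d > 0" "\<And>x. x \<in> A \<Longrightarrow> of_int d * x \<in> \<int>"
  using assms
proof (induction A arbitrary: thesis rule: finite_induct)
  case empty
  then show ?case by (metis empty_iff zero_less_one)
next
  case (insert x A)
  obtain d where d: "d > 0" "\<And>y. y \<in> A \<Longrightarrow> of_int d * y \<in> \<int>"
    using insert.IH by blast
  obtain a b where ab: "quotient_of x = (a, b)" by (cases "quotient_of x")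
  then have b: "b > 0" and x: "x = of_int a / of_int b"
    using quotient_of_denom_pos quotient_of_div by blast+
  have "of_int (d * b) * y \<in> \<int>" if "y \<in> insert x A" for y
  proof (cases "y = x")
    case True
    then have "of_int (d * b) * y = of_int (d * a)" using x b by simp
    then show ?thesis by (simp only: Ints_of_int)
  next
    case False
    then have "of_int (d * b) * y = of_int b * (of_int d * y)" by simp
    also have "\<dots> \<in> \<int>" using d(2) that False by simp
    finally show ?thesis .
  qed
  then show ?case using insert.prems d(1) b by (metis mult_pos_pos)
qed

lemma not_is_virtual_base_quadratic_form_quotients:
  fixes P Q :: "nat \<Rightarrow> int" and X :: "rat set"
  assumes nonsquare: "\<And>k. Q 1 ^ 2 - 4 * Q 0 * Q 2 \<noteq> k^2"
    and X: "\<And>v. v \<in> X \<Longrightarrow> \<exists>u w. coprime u w \<and> Q 2 * u^2 + Q 1 * u * w + Q 0 * w^2 \<noteq> 0 \<and>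
      v = of_int (P 2 * u^2 + P 1 * u * w + P 0 * w^2) / of_int (Q 2 * u^2 + Q 1 * u * w + Q 0 * w^2)"
  shows "\<not> is_virtual_base X"
proof -
  obtain l E where l: "prime l"
    and val: "\<And>u w. coprime u w \<Longrightarrow> \<not> l^(Suc E) dvd Q 2 * u^2 + Q 1 * u * w + Q 0 * w^2"
    using quadratic_form_bounded_valuation nonsquare by metis
  have "of_int l ^ E * v \<in> local_int l" if "v \<in> X" for v
    using X[OF that] prime_power_times_fraction_local_int[OF l _ val] by blast
  moreover have "(of_int l :: rat) ^ E \<noteq> 0" using l by (auto simp: prime_gt_0_int)
  ultimately show ?thesis using not_is_virtual_base_if_local_int[OF l] by blast
qed

lemma not_EWP_if_no_rational_pole:
  fixes p q :: "rat poly"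
  assumes p: "degree p \<le> 2" and q: "degree q = 2" and no_root: "\<And>a. poly q a \<noteq> 0"
  shows "\<not> EWP p q"
proof -
  obtain d :: int where d: "d > 0" "\<And>x. x \<in> coeff q ` {..2} \<union> coeff p ` {..2} \<Longrightarrow> of_int d * x \<in> \<int>"
    by (rule exists_common_denominator[of "coeff q ` {..2} \<union> coeff p ` {..2}"]) auto
  define Q where "Q i = \<lfloor>of_int d * coeff q i\<rfloor>" for i
  define P where "P i = \<lfloor>of_int d * coeff p i\<rfloor>" for i
  have QP: "of_int (Q i) = of_int d * coeff q i" "of_int (P i) = of_int d * coeff p i" if "i \<le> 2" for i
    using d(2)[of "coeff q i"] d(2)[of "coeff p i"] that by (auto simp: Q_def P_def elim!: Ints_cases)
  have d0: "(of_int d :: rat) \<noteq> 0" using d(1) by simp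
  have Q2: "Q 2 \<noteq> 0" using QP(1)[of 2] coeff_2_nonzero_if_degree_2[OF q] d0 by auto
  have "Q 1 ^ 2 - 4 * Q 0 * Q 2 \<noteq> k^2" for k
  proof (rule discriminant_nonsquare_if_no_root[OF Q2])
    fix a :: rat
    have "of_int (Q 0) + of_int (Q 1) * a + of_int (Q 2) * a^2 = of_int d * poly q a"
      using QP[of 0] QP[of 1] QP[of 2] poly_degree_le_2[of q] q by (simp add: algebra_simps)
    then show "of_int (Q 0) + of_int (Q 1) * a + of_int (Q 2) * a^2 \<noteq> 0" using d0 no_root by simp
  qed
  moreover have "\<exists>u w. coprime u w \<and> Q 2 * u^2 + Q 1 * u * w + Q 0 * w^2 \<noteq> 0 \<and>
      v = of_int (P 2 * u^2 + P 1 * u * w + P 0 * w^2) / of_int (Q 2 * u^2 + Q 1 * u * w + Q 0 * w^2)"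
    if v: "v \<in> rf_values p q" for v
  proof -
    obtain a where a: "v = poly p a / poly q a" using v by (auto simp: rf_values_def)
    obtain u w where uw: "quotient_of a = (u, w)" by (cases "quotient_of a")
    then have w: "w \<noteq> 0" and au: "a = of_int u / of_int w" and cop: "coprime u w"
      using quotient_of_denom_pos quotient_of_div quotient_of_coprime by fastforce+
    have hq: "of_int (Q 2 * u^2 + Q 1 * u * w + Q 0 * w^2) = of_int d * of_int w ^ 2 * poly q a"
      unfolding au by (rule homogenize_degree_le_2) (use QP q w in auto)
    have hp: "of_int (P 2 * u^2 + P 1 * u * w + P 0 * w^2) = of_int d * of_int w ^ 2 * poly p a"
      unfolding au by (rule homogenize_degree_le_2) (use QP p w in auto)
    have "of_int (Q 2 * u^2 + Q 1 * u * w + Q 0 * w^2) \<noteq> (0 :: rat)"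
      unfolding hq using d0 w no_root by simp
    then have "Q 2 * u^2 + Q 1 * u * w + Q 0 * w^2 \<noteq> 0" by (metis of_int_0)
    moreover have "v = of_int (P 2 * u^2 + P 1 * u * w + P 0 * w^2) / of_int (Q 2 * u^2 + Q 1 * u * w + Q 0 * w^2)"
      unfolding a hq hp using d0 w by simp
    ultimately show ?thesis using cop by blast
  qed
  ultimately show ?thesis
    unfolding EWP_def by (rule not_is_virtual_base_quadratic_form_quotients)
qed

lemma degree_1_poly:
  fixes q :: "rat poly"
  assumes q: "degree q = 1"
  shows "poly q a = coeff q 1 * (a - (- coeff q 0 / coeff q 1))"
  using poly_degree_le_2[of q a] q leading_coeff_neq_0[of q]
  by (force simp: coeff_eq_0 field_simps)

lemma degree_2_poly_cases:
  fixes q :: "rat poly"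
  assumes q: "degree q = 2"
  obtains (split) r s where "r \<noteq> s" "\<And>a. poly q a = coeff q 2 * (a - r) * (a - s)"
      "{a. poly q a = 0} = {r, s}"
    | (double) r where "\<And>a. poly q a = coeff q 2 * (a - r)^2" "{a. poly q a = 0} = {r}"
    | (no_root) "\<And>a. poly q a \<noteq> 0"
proof (cases "\<exists>r. poly q r = 0")
  case True
  then obtain r where r: "poly q r = 0" by blast
  define s where "s = - coeff q 1 / coeff q 2 - r"
  have q2: "coeff q 2 \<noteq> 0" using coeff_2_nonzero_if_degree_2[OF q] .
  have factor: "poly q a = coeff q 2 * (a - r) * (a - s)" for a
  proof -
    have "poly q a = poly q a - poly q r" using r by simp
    also have "\<dots> = coeff q 1 * (a - r) + coeff q 2 * (a^2 - r^2)"
      using poly_degree_le_2[of q] q by (simp add: algebra_simps)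
    also have "\<dots> = coeff q 2 * (a - r) * (a - s)"
      using q2 by (simp add: s_def field_simps power2_eq_square)
    finally show ?thesis .
  qed
  then have roots: "{a. poly q a = 0} = {r, s}" using q2 by auto
  show thesis
  proof (cases "r = s")
    case True
    then show thesis using double[of r] factor roots by (simp add: power2_eq_square)
  next
    case False
    then show thesis using split factor roots by blast
  qed
next
  case False
  then show thesis using no_root by blast
qed

lemma rf_degree_2_cases:
  fixes p q :: "rat poly"
  assumes q0: "q \<noteq> 0" and cop: "coprime p q" and deg: "rf_degree p q = 2"
  obtains
    (polynomial) c where "degree p = 2" "\<And>a. poly q a = c" "c \<noteq> 0" "rf_poles p q = {None}"
  | (linear) c r where "degree p = 2" "\<And>a. poly q a = c * (a - r)" "c \<noteq> 0" "poly p r \<noteq> 0"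
      "rf_poles p q = {Some r, None}"
  | (split) c r s where "degree p \<le> 2" "\<And>a. poly q a = c * (a - r) * (a - s)" "c \<noteq> 0" "r \<noteq> s"
      "poly p r \<noteq> 0" "poly p s \<noteq> 0" "rf_poles p q = {Some r, Some s}"
  | (double) c r where "degree p \<le> 2" "\<And>a. poly q a = c * (a - r)^2" "c \<noteq> 0" "poly p r \<noteq> 0"
      "rf_poles p q = {Some r}"
  | (no_root) "degree p \<le> 2" "degree q = 2" "\<And>a. poly q a \<noteq> 0" "rf_poles p q = {}"
proof -
  have degs: "max (degree p) (degree q) = 2" using deg by (simp add: rf_degree_def)
  have lead: "coeff q (degree q) \<noteq> 0" using q0 by simp
  have nonroot: "poly p r \<noteq> 0" if "poly q r = 0" for r
    using coprime_imp_poly_nonzero_at_root[OF cop that] .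
  consider "degree q = 0" | "degree q = 1" | "degree q = 2" using degs by linarith
  then show thesis
  proof cases
    case 1
    then have "poly q a = coeff q 0" for a using poly_degree_le_2[of q a] by (simp add: coeff_eq_0)
    then show thesis using polynomial[of "coeff q 0"] 1 degs lead by (simp add: rf_poles_def)
  next
    case 2
    note q = degree_1_poly[OF 2]
    then have "{a. poly q a = 0} = {- coeff q 0 / coeff q 1}" using 2 lead by auto
    moreover have "degree p = 2" using degs 2 by (simp add: max_def split: if_splits)
    ultimately show thesis using linear[OF _ q] 2 lead nonroot q by (auto simp: rf_poles_def)
  next
    case 3
    then have p: "degree p \<le> 2" and poles: "rf_poles p q = Some ` {a. poly q a = 0}"
      using degs by (auto simp: rf_poles_def)
    from 3 show thesis
    proof (cases rule: degree_2_poly_cases)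
      case (split r s)
      then show thesis using that(3)[OF p split(2) _ split(1)] poles nonroot 3 lead by auto
    next
      case (double r)
      then show thesis using that(4)[OF p double(1)] poles nonroot 3 lead by auto
    next
      case no_root
      then show thesis using that(5)[OF p 3 no_root] poles by auto
    qed
  qed
qed

theorem theorem4p3:
  fixes p q :: "rat poly"
  assumes "q \<noteq> 0" and "coprime p q" and "rf_degree p q = 2"
  shows "(card (rf_poles p q) = 2 \<longrightarrow> WP p q)
       \<and> (card (rf_poles p q) = 1 \<longrightarrow> EWP p q \<and> \<not> WP p q)
       \<and> (rf_poles p q = {} \<longrightarrow> \<not> EWP p q)"
  using assms
proof (cases rule: rf_degree_2_cases)
  case (polynomial c)
  then show ?thesis using EWP_not_WP_if_polynomial[of p q c] by simp
next
  case (linear c r)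
  then show ?thesis using WP_if_linear_denominator[of p q c r] by simp
next
  case (split c r s)
  then show ?thesis using WP_if_two_finite_poles[of p q c r s] by simp
next
  case (double c r)
  then show ?thesis using EWP_not_WP_if_double_pole[of p q c r] by simp
next
  case no_root
  then show ?thesis using not_EWP_if_no_rational_pole[of p q] by simp
qed

end
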